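(* Let $p=4k+1$ be a prime, let $J(k)=\sum_{i=1}^{4k-2}\big(\frac{i(i+1)(i+2)}{p}\big)$, let $S\subset\mathbb{P}^5$ be the surface over $\mathbb{F}_p$ defined by $x_1^2-x_2^2=x_3^2$, $x_0^2-x_1^2=x_4^2$, $x_0^2-x_2^2=x_5^2$, let $M_p$ be the number of solutions $(x,y,z)\in\mathbb{F}_p^3$ of $z^2=(x^2y^2+1)(x^2+y^2)$, and let $N_p$ be the number of solutions $(x,y)\in\mathbb{F}_p^2$ of $y^2=x^3-x$. Then $$|S(\mathbb{F}_p)|=(p+1)^2+J(k)^2\quad\text{if and only if}\quad M_p=(p+1)^2+(N_p-p)^2+1=(p+1)^2+J(k)^2+1.$$
   Context: $\big(\frac{a}{p}\big)$ is the Legendre symbol. *)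

theory Defs
  imports "HOL-Number_Theory.Number_Theory"
begin

text \<open>Elements of F_p are represented by integer residues in {0..<p}.\<close>

definition J :: "nat \<Rightarrow> nat \<Rightarrow> int" where
  "J p k = (\<Sum>i=1..4*k-2. Legendre (int i * (int i + 1) * (int i + 2)) (int p))"

definition S_cone :: "nat \<Rightarrow> int list set" where
  "S_cone p = {x. length x = 6 \<and> (\<forall>c\<in>set x. 0 \<le> c \<and> c < int p) \<and> x \<noteq> replicate 6 0 \<and>
     [x!1^2 - x!2^2 = x!3^2] (mod int p) \<and>
     [x!0^2 - x!1^2 = x!4^2] (mod int p) \<and>
     [x!0^2 - x!2^2 = x!5^2] (mod int p)}"

definition proj_rel :: "nat \<Rightarrow> int list set \<Rightarrow> (int list \<times> int list) set" where
  "proj_rel p A = {(x,y). x \<in> A \<and> y \<in> A \<and>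
     (\<exists>c. \<not> [c = 0] (mod int p) \<and> (\<forall>i<6. [y!i = c * x!i] (mod int p)))}"

definition S_points :: "nat \<Rightarrow> int list set set" where
  "S_points p = S_cone p // proj_rel p (S_cone p)"

definition M :: "nat \<Rightarrow> nat" where
  "M p = card {(x,y,z). x \<in> {0..<int p} \<and> y \<in> {0..<int p} \<and> z \<in> {0..<int p} \<and>
     [z^2 = (x^2*y^2 + 1) * (x^2 + y^2)] (mod int p)}"

definition N :: "nat \<Rightarrow> nat" where
  "N p = card {(x,y). x \<in> {0..<int p} \<and> y \<in> {0..<int p} \<and>
     [y^2 = x^3 - x] (mod int p)}"

end

theory Submission
  imports Defs
begin

text \<open>
  The map \<open>(x, y, z) \<mapsto> [z : y(x\<^sup>2 + 1) : y(x\<^sup>2 - 1) : 2xy : x(y\<^sup>2 - 1) : x(y\<^sup>2 + 1)]\<close>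
  sends the affine surface \<open>z\<^sup>2 = (x\<^sup>2y\<^sup>2 + 1)(x\<^sup>2 + y\<^sup>2)\<close> to \<open>S\<close>, and on the part
  with \<open>xy \<noteq> 0\<close> it is a bijection onto the points of \<open>S\<close> with \<open>x\<^sub>3 \<noteq> 0\<close>; the inverse is
  \<open>x = x\<^sub>3/(x\<^sub>1 - x\<^sub>2)\<close>, \<open>y = x\<^sub>3/(x\<^sub>5 - x\<^sub>4)\<close>. The affine surface has \<open>4p - 3\<close>
  further points (those with \<open>xy = 0\<close>, where \<open>z = \<plusminus>y\<close> or \<open>z = \<plusminus>x\<close>), while \<open>S\<close> has
  \<open>4(p - 1)\<close> points with \<open>x\<^sub>3 = 0\<close> (there \<open>x\<^sub>2 = \<plusminus>x\<^sub>1\<close>, \<open>x\<^sub>5 = \<plusminus>x\<^sub>4\<close> and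
  \<open>x\<^sub>0\<^sup>2 = x\<^sub>1\<^sup>2 + x\<^sub>4\<^sup>2\<close>). Hence \<open>|S(\<bbbF>\<^sub>p)| = M\<^sub>p - 1\<close>. Independently,
  \<open>N\<^sub>p = p + \<Sum>\<^sub>x ((x\<^sup>3 - x) / p)\<close>, and the shift \<open>x = i + 1\<close> turns this sum into \<open>J(k)\<close>.
  With these two identities both sides of the equivalence say the same thing.
\<close>

lemma card_preimage_inj_endo:
  assumes "finite A" "inj_on f A" "f ` A \<subseteq> A"
  shows "card {x \<in> A. Q (f x)} = card {y \<in> A. Q y}"
proof -
  have "f ` A = A"
    using endo_inj_surj assms by blast
  then have "f ` {x \<in> A. Q (f x)} = {y \<in> A. Q y}"
    by auto
  moreover have "inj_on f {x \<in> A. Q (f x)}"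
    using assms(2) by (rule inj_on_subset) blast
  ultimately show ?thesis
    using card_image by fastforce
qed

lemma cong_lincomb:
  fixes m :: int
  assumes "[x = x'] (mod m)" "[y = y'] (mod m)" and "a - b = q * (x - x') + r * (y - y')"
  shows "[a = b] (mod m)"
  using assms by (simp add: cong_iff_dvd_diff)

lemma cong_diff_squares_scale:
  fixes m :: int
  assumes "[a' = c * a] (mod m)" "[b' = c * b] (mod m)" "[d' = c * d] (mod m)"
    and "[a^2 - b^2 = d^2] (mod m)"
  shows "[a'^2 - b'^2 = d'^2] (mod m)"
proof -
  have "[a'^2 - b'^2 = (c * a)^2 - (c * b)^2] (mod m)"
    using assms(1,2) by (intro cong_diff cong_pow) assumption+
  also have "(c * a)^2 - (c * b)^2 = c^2 * (a^2 - b^2)"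
    by (simp add: algebra_simps power2_eq_square)
  also have "[c^2 * (a^2 - b^2) = c^2 * d^2] (mod m)"
    using assms(4) by (rule cong_scalar_left)
  also have "c^2 * d^2 = (c * d)^2"
    by (simp add: power_mult_distrib)
  also have "[(c * d)^2 = d'^2] (mod m)"
    using cong_sym[OF assms(3)] by (rule cong_pow)
  finally show ?thesis .
qed

locale odd_prime =
  fixes p :: nat
  assumes prime_p: "prime p" and odd_p: "odd p"
begin

abbreviation P :: int where "P \<equiv> int p"

abbreviation Fp :: "int set" where "Fp \<equiv> {0..<P}"

lemma prime_P: "prime P"
  using prime_p by simp

lemma P_gt_2: "P > 2"
proof -
  have "p \<noteq> 2"
    using odd_p by auto
  then show ?thesis
    using prime_ge_2_nat[OF prime_p] by linarith
qed

lemma not_P_dvd_2: "\<not> P dvd 2"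
  using P_gt_2 by (auto dest: zdvd_imp_le)

lemma P_dvd_mult_iff: "P dvd a * b \<longleftrightarrow> P dvd a \<or> P dvd b"
  using prime_P by (rule prime_dvd_mult_iff)

lemma coprime_P_iff: "coprime a P \<longleftrightarrow> \<not> P dvd a"
  using prime_P coprime_commute[of a P]
  by (auto intro: prime_imp_coprime dest: coprime_common_divisor)

lemma residue_cong_iff: "a \<in> Fp \<Longrightarrow> b \<in> Fp \<Longrightarrow> [a = b] (mod P) \<longleftrightarrow> a = b"
  by (auto intro: cong_less_imp_eq_int)

lemma residue_dvd_iff: "a \<in> Fp \<Longrightarrow> P dvd a \<longleftrightarrow> a = 0"
  by (cases "a = 0") (auto dest: zdvd_imp_le)

lemma nonzero_residue_not_dvd: "a \<in> Fp - {0} \<Longrightarrow> \<not> P dvd a"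
  using residue_dvd_iff by auto

lemma residue_mod_eq: "a \<in> Fp \<Longrightarrow> [a = b] (mod P) \<longleftrightarrow> a = b mod P"
  by (auto simp: cong_def)

lemma cong_mult_cancel_right: "[a * u = b * u] (mod P) \<Longrightarrow> \<not> P dvd u \<Longrightarrow> [a = b] (mod P)"
  by (simp add: cong_mult_rcancel coprime_P_iff)

lemma sum_remove_0: "(\<Sum>x\<in>Fp. f x) = f 0 + (\<Sum>x\<in>Fp - {0}. f x)"
  using P_gt_2 by (intro sum.remove) auto

lemma linear_congruence_solutions:
  assumes "\<not> P dvd u"
  shows "{v \<in> Fp. [u * v = c] (mod P)} = {(modular_inverse P u * c) mod P}"
proof -
  define w where "w = modular_inverse P u"
  have inv: "[u * w = 1] (mod P)"
    using assms by (simp add: w_def cong_modular_inverse1 coprime_P_iff)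
  have "[u * v = c] (mod P) \<longleftrightarrow> [v = w * c] (mod P)" for v
  proof
    assume "[u * v = c] (mod P)"
    then show "[v = w * c] (mod P)"
      by (rule cong_lincomb[OF inv, where q = "- v" and r = w]) (simp add: algebra_simps)
  next
    assume "[v = w * c] (mod P)"
    then show "[u * v = c] (mod P)"
      by (rule cong_lincomb[OF inv, where q = c and r = u]) (simp add: algebra_simps)
  qed
  moreover have "v \<in> Fp \<and> [v = w * c] (mod P) \<longleftrightarrow> v = (w * c) mod P" for v
    using P_gt_2 residue_mod_eq[of v "w * c"] by auto
  ultimately show ?thesis
    unfolding w_def by blast
qed

lemma ex_linear_congruence_solution:
  assumes "\<not> P dvd u"
  shows "\<exists>v \<in> Fp. [u * v = c] (mod P)"
proof -
  have "(modular_inverse P u * c) mod P \<in> {v \<in> Fp. [u * v = c] (mod P)}"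
    unfolding linear_congruence_solutions[OF assms] by simp
  then show ?thesis
    by blast
qed

section \<open>Square roots and the hyperbola\<close>

definition square_roots :: "int \<Rightarrow> int set" where
  "square_roots a = {y \<in> Fp. [y^2 = a] (mod P)}"

lemma finite_square_roots [simp]: "finite (square_roots a)"
  unfolding square_roots_def by (rule finite_subset[of _ Fp]) auto

lemma square_roots_cong: "[a = b] (mod P) \<Longrightarrow> square_roots a = square_roots b"
  by (simp add: square_roots_def cong_def)

lemma square_roots_of_square: "square_roots (b^2) = {b mod P, (- b) mod P}"
proof -
  have "[y^2 = b^2] (mod P) \<longleftrightarrow> [y = b] (mod P) \<or> [y = - b] (mod P)" for y
  proof -
    have "y^2 - b^2 = (y - b) * (y - - b)"
      by (simp add: algebra_simps power2_eq_square)
    then show ?thesis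
      by (simp add: cong_iff_dvd_diff P_dvd_mult_iff)
  qed
  then show ?thesis
    using P_gt_2 by (auto simp: square_roots_def residue_mod_eq)
qed

lemma card_square_roots_of_square:
  "card (square_roots (b^2)) = (if P dvd b then 1 else 2)"
proof -
  have "b mod P = (- b) mod P \<longleftrightarrow> P dvd 2 * b"
    by (simp add: mod_eq_dvd_iff)
  also have "\<dots> \<longleftrightarrow> P dvd b"
    using not_P_dvd_2 by (simp add: P_dvd_mult_iff)
  finally show ?thesis
    by (simp add: square_roots_of_square)
qed

lemma card_square_roots_residue:
  "b \<in> Fp \<Longrightarrow> card (square_roots (b^2)) = (if b = 0 then 1 else 2)"
  using card_square_roots_of_square[of b] residue_dvd_iff[of b] by simp

lemma sum_card_square_roots_nonzero: "(\<Sum>b\<in>Fp - {0}. card (square_roots (b^2))) = 2 * (p - 1)"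
proof -
  have "(\<Sum>b\<in>Fp - {0}. card (square_roots (b^2))) = (\<Sum>b\<in>Fp - {0}. 2)"
    by (rule sum.cong) (simp_all add: card_square_roots_residue)
  also have "\<dots> = 2 * (p - 1)"
    using P_gt_2 by (simp add: card_Diff_singleton nat_diff_distrib')
  finally show ?thesis .
qed

lemma card_square_roots: "int (card (square_roots a)) = 1 + Legendre a P"
proof -
  consider "[a = 0] (mod P)" | b where "\<not> [a = 0] (mod P)" "[b^2 = a] (mod P)"
    | "\<not> [a = 0] (mod P)" "\<not> QuadRes P a"
    unfolding QuadRes_def by blast
  then show ?thesis
  proof cases
    case 1
    then have "square_roots a = square_roots (0^2)"
      by (simp add: square_roots_cong)
    then show ?thesis
      using 1 card_square_roots_of_square[of 0] by (simp add: Legendre_def)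
  next
    case 2
    have "\<not> P dvd b"
    proof
      assume "P dvd b"
      then have "[b^2 = 0] (mod P)"
        by (simp add: cong_0_iff power2_eq_square)
      with 2 show False
        by (meson cong_sym cong_trans)
    qed
    then have "card (square_roots a) = 2"
      using square_roots_cong[OF cong_sym[OF 2(2)]] by (simp add: card_square_roots_of_square)
    moreover have "QuadRes P a"
      using 2 by (auto simp: QuadRes_def)
    ultimately show ?thesis
      using 2 by (simp add: Legendre_def)
  next
    case 3
    then have "square_roots a = {}"
      by (auto simp: square_roots_def QuadRes_def)
    then show ?thesis
      using 3 by (simp add: Legendre_def QuadRes_def)
  qed
qed

lemma card_product_solutions:
  "int (card {(u, v). u \<in> Fp \<and> v \<in> Fp \<and> [u * v = c] (mod P)}) =
     (if P dvd c then 2 * P - 1 else P - 1)"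
proof -
  define fiber where "fiber u = {v \<in> Fp. [u * v = c] (mod P)}" for u
  have "fiber 0 = (if P dvd c then Fp else {})"
    by (auto simp: fiber_def cong_iff_dvd_diff)
  then have fiber_0: "card (fiber 0) = (if P dvd c then p else 0)"
    by simp
  have fiber_nonzero: "card (fiber u) = 1" if "u \<in> Fp - {0}" for u
    using that linear_congruence_solutions[of u c] residue_dvd_iff[of u] by (simp add: fiber_def)
  have "{(u, v). u \<in> Fp \<and> v \<in> Fp \<and> [u * v = c] (mod P)} = Sigma Fp fiber"
    by (auto simp: fiber_def)
  moreover have "finite (fiber u)" for u
    unfolding fiber_def by (rule finite_subset[of _ Fp]) auto
  ultimately have "card {(u, v). u \<in> Fp \<and> v \<in> Fp \<and> [u * v = c] (mod P)} = (\<Sum>u\<in>Fp. card (fiber u))"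
    by simp
  also have "\<dots> = card (fiber 0) + (\<Sum>u\<in>Fp - {0}. card (fiber u))"
    by (rule sum_remove_0)
  also have "\<dots> = card (fiber 0) + (p - 1)"
    using P_gt_2 by (simp add: fiber_nonzero)
  finally show ?thesis
    using fiber_0 P_gt_2 by auto
qed

definition hyperbola :: "int \<Rightarrow> (int \<times> int) set" where
  "hyperbola c = {(a, b). a \<in> Fp \<and> b \<in> Fp \<and> [a^2 - b^2 = c] (mod P)}"

lemma finite_hyperbola [simp]: "finite (hyperbola c)"
  by (rule finite_subset[of _ "Fp \<times> Fp"]) (auto simp: hyperbola_def)

lemma card_hyperbola: "int (card (hyperbola c)) = (if P dvd c then 2 * P - 1 else P - 1)"
proof -
  define f where "f = (\<lambda>(a, b). ((a - b) mod P, (a + b) mod P))"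
  define Q where "Q = (\<lambda>(u, v). [u * v = c] (mod P))"
  have "inj_on f (Fp \<times> Fp)"
  proof (rule inj_onI, clarify)
    fix a b a' b'
    assume in_Fp: "a \<in> Fp" "b \<in> Fp" "a' \<in> Fp" "b' \<in> Fp" and "f (a, b) = f (a', b')"
    then have diff: "[a - b = a' - b'] (mod P)" and sum: "[a + b = a' + b'] (mod P)"
      by (simp_all add: f_def cong_def)
    have "[a * 2 = a' * 2] (mod P)"
      by (rule cong_lincomb[OF sum diff, where q = 1 and r = 1]) simp
    moreover have "[b * 2 = b' * 2] (mod P)"
      by (rule cong_lincomb[OF sum diff, where q = 1 and r = "-1"]) simp
    ultimately have "[a = a'] (mod P)" "[b = b'] (mod P)"
      using not_P_dvd_2 by (auto dest: cong_mult_cancel_right)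
    with in_Fp show "a = a' \<and> b = b'"
      by (simp add: residue_cong_iff)
  qed
  moreover have "f ` (Fp \<times> Fp) \<subseteq> Fp \<times> Fp"
    using P_gt_2 by (auto simp: f_def)
  ultimately have "card {x \<in> Fp \<times> Fp. Q (f x)} = card {y \<in> Fp \<times> Fp. Q y}"
    by (intro card_preimage_inj_endo) auto
  moreover have "Q (f (a, b)) \<longleftrightarrow> [a^2 - b^2 = c] (mod P)" for a b
  proof -
    have "(a - b) mod P * ((a + b) mod P) mod P = (a^2 - b^2) mod P"
      by (simp add: mod_mult_eq power2_eq_square algebra_simps)
    then show ?thesis
      by (simp add: Q_def f_def cong_def)
  qed
  then have "hyperbola c = {x \<in> Fp \<times> Fp. Q (f x)}"
    by (auto simp: hyperbola_def)
  moreover have "{(u, v). u \<in> Fp \<and> v \<in> Fp \<and> [u * v = c] (mod P)} = {y \<in> Fp \<times> Fp. Q y}"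
    by (auto simp: Q_def)
  ultimately show ?thesis
    using card_product_solutions[of c] by simp
qed

lemma sum_hyperbola_card_square_roots:
  "(\<Sum>ab\<in>hyperbola (c^2). int (card (square_roots (snd ab ^ 2)))) =
     2 * int (card (hyperbola (c^2))) - int (card (square_roots (c^2)))"
proof -
  have "(\<Sum>ab\<in>hyperbola (c^2). int (card (square_roots (snd ab ^ 2)))) =
      (\<Sum>ab\<in>hyperbola (c^2). 2 - of_bool (snd ab = 0))"
    by (auto simp: hyperbola_def card_square_roots_residue intro!: sum.cong)
  also have "\<dots> = 2 * int (card (hyperbola (c^2))) - int (card (hyperbola (c^2) \<inter> {ab. snd ab = 0}))"
    by (simp add: sum_subtractf)
  also have "hyperbola (c^2) \<inter> {ab. snd ab = 0} = (\<lambda>a. (a, 0)) ` square_roots (c^2)"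
    by (auto simp: hyperbola_def square_roots_def)
  also have "card \<dots> = card (square_roots (c^2))"
    by (rule card_image) (simp add: inj_on_def)
  finally show ?thesis .
qed

section \<open>The curve and the sum J(k)\<close>

lemma N_eq_sum_Legendre: "int (N p) = P + (\<Sum>x\<in>Fp. Legendre (x^3 - x) P)"
proof -
  have "{(x, y). x \<in> Fp \<and> y \<in> Fp \<and> [y^2 = x^3 - x] (mod P)} = Sigma Fp (\<lambda>x. square_roots (x^3 - x))"
    by (auto simp: square_roots_def)
  then have "int (N p) = (\<Sum>x\<in>Fp. int (card (square_roots (x^3 - x))))"
    by (simp add: N_def)
  also have "\<dots> = (\<Sum>x\<in>Fp. 1 + Legendre (x^3 - x) P)"
    by (simp add: card_square_roots)
  finally show ?thesis
    using P_gt_2 by (simp add: sum.distrib)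
qed

lemma J_eq_sum_Legendre:
  assumes "p = 4 * k + 1"
  shows "J p k = (\<Sum>x\<in>Fp. Legendre (x^3 - x) P)"
proof -
  define f where "f x = Legendre (x^3 - x) P" for x
  have k: "k \<ge> 1"
    using assms P_gt_2 by simp
  have "J p k = (\<Sum>i\<in>{1..4*k-2}. f (int i + 1))"
  proof -
    have "(y + 1)^3 - (y + 1) = y * (y + 1) * (y + 2)" for y :: int
      by (simp add: algebra_simps power3_eq_cube)
    then show ?thesis
      by (simp add: J_def f_def)
  qed
  also have "\<dots> = sum f ((\<lambda>i. int i + 1) ` {1..4*k-2})"
    by (simp add: sum.reindex inj_on_def)
  also have "(\<lambda>i. int i + 1) ` {1..4*k-2} = {2..P-2}"
  proof -
    have "(\<lambda>i. int i + 1) ` {1..4*k-2} = plus 1 ` int ` {1..4*k-2}"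
      by (auto simp: image_image)
    also have "\<dots> = {2..P-2}"
      using assms k by (simp add: image_int_atLeastAtMost of_nat_diff)
    finally show ?thesis .
  qed
  also have "sum f {2..P-2} = sum f Fp"
  proof (rule sum.mono_neutral_left)
    have "(P - 1)^3 - (P - 1) = P * ((P - 1) * (P - 2))"
      by (simp add: algebra_simps power3_eq_cube)
    then have "f (P - 1) = 0"
      by (simp add: f_def Legendre_def cong_0_iff)
    moreover have "Fp - {2..P-2} = {0, 1, P - 1}"
      using P_gt_2 by auto
    ultimately show "\<forall>x\<in>Fp - {2..P-2}. f x = 0"
      by (auto simp: f_def Legendre_def)
  qed auto
  finally show ?thesis
    unfolding f_def .
qed

section \<open>Projective points of S\<close>

definition on_S :: "int list \<Rightarrow> bool" where
  "on_S v \<longleftrightarrow> [v!1^2 - v!2^2 = v!3^2] (mod P) \<and> [v!0^2 - v!1^2 = v!4^2] (mod P) \<and>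
     [v!0^2 - v!2^2 = v!5^2] (mod P)"

definition scale :: "int \<Rightarrow> int list \<Rightarrow> int list" where
  "scale c v = map (\<lambda>t. (c * t) mod P) v"

lemma length_scale [simp]: "length (scale c v) = length v"
  by (simp add: scale_def)

lemma nth_scale [simp]: "i < length v \<Longrightarrow> scale c v ! i = (c * v!i) mod P"
  by (simp add: scale_def)

lemma S_cone_iff:
  "v \<in> S_cone p \<longleftrightarrow> length v = 6 \<and> (\<forall>i<6. v!i \<in> Fp) \<and> (\<exists>i<6. v!i \<noteq> 0) \<and> on_S v"
proof -
  have "(\<forall>t\<in>set v. 0 \<le> t \<and> t < P) \<longleftrightarrow> (\<forall>i<length v. v!i \<in> Fp)"
    by (metis atLeastLessThan_iff in_set_conv_nth)
  moreover have "length v = 6 \<Longrightarrow> v \<noteq> replicate 6 0 \<longleftrightarrow> (\<exists>i<6. v!i \<noteq> 0)"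
    by (auto simp: list_eq_iff_nth_eq)
  ultimately show ?thesis
    unfolding S_cone_def on_S_def by auto
qed

lemma finite_S_cone: "finite (S_cone p)"
proof (rule finite_subset)
  show "S_cone p \<subseteq> {v. set v \<subseteq> Fp \<and> length v = 6}"
    by (auto simp: S_cone_def)
  show "finite {v. set v \<subseteq> Fp \<and> length v = 6}"
    by (rule finite_lists_length_eq) simp
qed

lemma on_S_scale:
  assumes "\<forall>i<6. [w!i = c * v!i] (mod P)" and "on_S v"
  shows "on_S w"
proof -
  have "[w!0 = c * v!0] (mod P)" "[w!1 = c * v!1] (mod P)" "[w!2 = c * v!2] (mod P)"
    "[w!3 = c * v!3] (mod P)" "[w!4 = c * v!4] (mod P)" "[w!5 = c * v!5] (mod P)"
    using assms(1) by simp_all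
  then show ?thesis
    using assms(2) unfolding on_S_def by (blast intro: cong_diff_squares_scale)
qed

lemma cong_scale_inverse:
  assumes "\<forall>i<6. [w!i = c * v!i] (mod P)" and "\<not> P dvd c"
  obtains c' where "\<not> P dvd c'" and "\<forall>i<6. [v!i = c' * w!i] (mod P)"
proof
  define c' where "c' = modular_inverse P c"
  have inv: "[c * c' = 1] (mod P)"
    using assms(2) by (simp add: c'_def cong_modular_inverse1 coprime_P_iff)
  show "\<not> P dvd c'"
    using assms(2) by (simp add: c'_def flip: coprime_P_iff)
  show "\<forall>i<6. [v!i = c' * w!i] (mod P)"
  proof (intro allI impI)
    fix i :: nat
    assume "i < 6"
    with assms(1) have "[w!i = c * v!i] (mod P)"
      by blast
    then show "[v!i = c' * w!i] (mod P)"
      by (rule cong_lincomb[OF inv, where q = "- v!i" and r = "- c'"]) (simp add: algebra_simps)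
  qed
qed

lemma scale_in_S_cone:
  assumes v: "v \<in> S_cone p" and c: "\<not> P dvd c"
  shows "scale c v \<in> S_cone p"
proof -
  obtain j where j: "j < 6" "v!j \<noteq> 0" and len: "length v = 6" and in_Fp: "\<forall>i<6. v!i \<in> Fp"
    and on_S: "on_S v"
    using v unfolding S_cone_iff by blast
  have "\<not> P dvd v!j"
    using residue_dvd_iff[of "v!j"] in_Fp j by simp
  then have "\<not> P dvd c * v!j"
    using c by (simp add: P_dvd_mult_iff)
  then have "scale c v ! j \<noteq> 0"
    using j len by (simp add: dvd_eq_mod_eq_0)
  moreover have "on_S (scale c v)"
    by (rule on_S_scale[OF _ on_S, where c = c]) (simp add: len cong_def)
  moreover have "\<forall>i<6. scale c v ! i \<in> Fp"
    using len P_gt_2 by simp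
  ultimately show ?thesis
    unfolding S_cone_iff using j len by auto
qed

lemma proj_rel_iff:
  "(v, w) \<in> proj_rel p (S_cone p) \<longleftrightarrow> v \<in> S_cone p \<and> w \<in> S_cone p \<and>
     (\<exists>c. \<not> P dvd c \<and> (\<forall>i<6. [w!i = c * v!i] (mod P)))"
  by (simp add: proj_rel_def cong_0_iff)

lemma equiv_proj_rel: "equiv (S_cone p) (proj_rel p (S_cone p))"
proof (rule equivI)
  show "proj_rel p (S_cone p) \<subseteq> S_cone p \<times> S_cone p"
    by (auto simp: proj_rel_def)
  show "refl_on (S_cone p) (proj_rel p (S_cone p))"
    using P_gt_2 by (intro refl_onI) (auto simp: proj_rel_iff intro!: exI[of _ 1] dest: zdvd_imp_le)
  show "sym (proj_rel p (S_cone p))"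
  proof (rule symI)
    fix v w
    assume "(v, w) \<in> proj_rel p (S_cone p)"
    then obtain c where vw: "v \<in> S_cone p" "w \<in> S_cone p" and c: "\<not> P dvd c"
      and w: "\<forall>i<6. [w!i = c * v!i] (mod P)"
      by (auto simp: proj_rel_iff)
    obtain c' where "\<not> P dvd c'" and "\<forall>i<6. [v!i = c' * w!i] (mod P)"
      using cong_scale_inverse[OF w c] by blast
    then show "(w, v) \<in> proj_rel p (S_cone p)"
      using vw by (auto simp: proj_rel_iff)
  qed
  show "trans (proj_rel p (S_cone p))"
  proof (rule transI)
    fix u v w
    assume "(u, v) \<in> proj_rel p (S_cone p)" "(v, w) \<in> proj_rel p (S_cone p)"
    then obtain c d where uvw: "u \<in> S_cone p" "w \<in> S_cone p" and cd: "\<not> P dvd c" "\<not> P dvd d"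
      and v: "\<forall>i<6. [v!i = c * u!i] (mod P)" and w: "\<forall>i<6. [w!i = d * v!i] (mod P)"
      by (auto simp: proj_rel_iff)
    have "\<not> P dvd d * c"
      using cd by (simp add: P_dvd_mult_iff)
    moreover have "[w!i = (d * c) * u!i] (mod P)" if "i < 6" for i
      by (rule cong_lincomb[OF w[rule_format, OF that] v[rule_format, OF that], where q = 1 and r = d])
        (simp add: algebra_simps)
    ultimately show "(u, w) \<in> proj_rel p (S_cone p)"
      using uvw by (auto simp: proj_rel_iff)
  qed
qed

lemma scale_mod [simp]: "scale (c mod P) v = scale c v"
  by (simp add: scale_def mod_mult_left_eq)

lemma eq_scale_if_cong:
  assumes "length w = length v" and "\<forall>i<length v. w!i \<in> Fp"
    and "\<forall>i<length v. [w!i = c * v!i] (mod P)"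
  shows "w = scale c v"
proof (rule nth_equalityI)
  fix i
  assume "i < length w"
  then show "w!i = scale c v ! i"
    using assms residue_mod_eq[of "w!i" "c * v!i"] by simp
qed (simp add: assms(1))

lemma proj_class_eq:
  assumes v: "v \<in> S_cone p"
  shows "proj_rel p (S_cone p) `` {v} = (\<lambda>c. scale c v) ` {1..<P}"
proof (intro equalityI subsetI)
  fix w
  assume "w \<in> proj_rel p (S_cone p) `` {v}"
  then obtain c where w: "w \<in> S_cone p" and c: "\<not> P dvd c" and wc: "\<forall>i<6. [w!i = c * v!i] (mod P)"
    by (auto simp: proj_rel_iff)
  then have "w = scale (c mod P) v"
    using v by (simp add: S_cone_iff eq_scale_if_cong)
  moreover have "c mod P \<in> {1..<P}"
  proof -
    have "c mod P \<noteq> 0"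
      using c by (simp add: dvd_eq_mod_eq_0)
    moreover have "0 \<le> c mod P" "c mod P < P"
      using P_gt_2 by simp_all
    ultimately show ?thesis
      by simp
  qed
  ultimately show "w \<in> (\<lambda>c. scale c v) ` {1..<P}"
    by blast
next
  fix w
  assume "w \<in> (\<lambda>c. scale c v) ` {1..<P}"
  then obtain c where c: "c \<in> {1..<P}" and w: "w = scale c v"
    by blast
  have "\<not> P dvd c"
    using c residue_dvd_iff[of c] by simp
  moreover have "\<forall>i<6. [w!i = c * v!i] (mod P)"
    using v w by (simp add: S_cone_iff cong_def)
  ultimately show "w \<in> proj_rel p (S_cone p) `` {v}"
    using v w scale_in_S_cone by (auto simp: proj_rel_iff)
qed

lemma card_proj_class:
  assumes v: "v \<in> S_cone p"
  shows "card (proj_rel p (S_cone p) `` {v}) = p - 1"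
proof -
  obtain j where j: "j < 6" "v!j \<noteq> 0" and len: "length v = 6" and in_Fp: "\<forall>i<6. v!i \<in> Fp"
    using v by (auto simp: S_cone_iff)
  then have vj: "\<not> P dvd v!j"
    using residue_dvd_iff by blast
  have "inj_on (\<lambda>c. scale c v) {1..<P}"
  proof (rule inj_onI)
    fix c d
    assume cd: "c \<in> {1..<P}" "d \<in> {1..<P}" and "scale c v = scale d v"
    then have "scale c v ! j = scale d v ! j"
      by simp
    then have "[c * v!j = d * v!j] (mod P)"
      using j len by (simp add: cong_def)
    then have "[c = d] (mod P)"
      using vj by (rule cong_mult_cancel_right)
    then show "c = d"
      using cd by (simp add: residue_cong_iff)
  qed
  then show ?thesis
    by (simp add: proj_class_eq[OF v] card_image)
qed

lemma card_S_cone: "card (S_cone p) = (p - 1) * card (S_points p)"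
proof -
  have equiv: "equiv (S_cone p) (proj_rel p (S_cone p))"
    by (rule equiv_proj_rel)
  have "(p - 1) * card (S_points p) = card (\<Union> (S_points p))"
  proof (rule card_partition)
    show "finite (S_points p)"
      unfolding S_points_def using finite_S_cone equiv by (intro finite_quotient) (auto simp: equiv_def)
    show "finite (\<Union> (S_points p))"
      unfolding S_points_def using finite_S_cone equiv by (simp add: Union_quotient)
    show "card X = p - 1" if "X \<in> S_points p" for X
      using that unfolding S_points_def by (auto elim!: quotientE simp: card_proj_class)
    show "X \<inter> Y = {}" if "X \<in> S_points p" "Y \<in> S_points p" "X \<noteq> Y" for X Y
      using that quotient_disj[OF equiv] unfolding S_points_def by blast
  qed
  also have "\<Union> (S_points p) = S_cone p"
    unfolding S_points_def using equiv by (rule Union_quotient)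
  finally show ?thesis ..
qed

section \<open>Points of S off the hyperplane x3 = 0\<close>

definition S_param :: "int \<Rightarrow> int \<Rightarrow> int \<Rightarrow> int list" where
  "S_param x y z = [z, y * (x^2 + 1), y * (x^2 - 1), 2 * x * y, x * (y^2 - 1), x * (y^2 + 1)]"

lemma S_param_nth:
  "S_param x y z ! 0 = z" "S_param x y z ! 1 = y * (x^2 + 1)" "S_param x y z ! 2 = y * (x^2 - 1)"
  "S_param x y z ! 3 = 2 * x * y" "S_param x y z ! 4 = x * (y^2 - 1)" "S_param x y z ! 5 = x * (y^2 + 1)"
  "length (S_param x y z) = 6"
  by (simp_all add: S_param_def)

lemma on_S_S_param_iff:
  "on_S (S_param x y z) \<longleftrightarrow> [z^2 = (x^2 * y^2 + 1) * (x^2 + y^2)] (mod P)"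
proof -
  have "(y * (x^2 + 1))^2 - (y * (x^2 - 1))^2 = (2 * x * y)^2"
    by (simp add: algebra_simps power2_eq_square)
  then have 1: "[(y * (x^2 + 1))^2 - (y * (x^2 - 1))^2 = (2 * x * y)^2] (mod P)"
    by simp
  have "z^2 - (y * (x^2 + 1))^2 - (x * (y^2 - 1))^2 = z^2 - (x^2 * y^2 + 1) * (x^2 + y^2)"
    by (simp add: algebra_simps power2_eq_square)
  then have 2: "[z^2 - (y * (x^2 + 1))^2 = (x * (y^2 - 1))^2] (mod P) \<longleftrightarrow>
      [z^2 = (x^2 * y^2 + 1) * (x^2 + y^2)] (mod P)"
    unfolding cong_iff_dvd_diff by (simp only:)
  have "z^2 - (y * (x^2 - 1))^2 - (x * (y^2 + 1))^2 = z^2 - (x^2 * y^2 + 1) * (x^2 + y^2)"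
    by (simp add: algebra_simps power2_eq_square)
  then have 3: "[z^2 - (y * (x^2 - 1))^2 = (x * (y^2 + 1))^2] (mod P) \<longleftrightarrow>
      [z^2 = (x^2 * y^2 + 1) * (x^2 + y^2)] (mod P)"
    unfolding cong_iff_dvd_diff by (simp only:)
  show ?thesis
    unfolding on_S_def S_param_nth by (simp only: 1 2 3 simp_thms)
qed

definition M_generic :: "(int \<times> int \<times> int) set" where
  "M_generic = {(x, y, z). x \<in> Fp - {0} \<and> y \<in> Fp - {0} \<and> z \<in> Fp \<and>
     [z^2 = (x^2 * y^2 + 1) * (x^2 + y^2)] (mod P)}"

definition S_cone_generic :: "int list set" where
  "S_cone_generic = {v \<in> S_cone p. v!3 \<noteq> 0}"

lemma scale_S_param_in_S_cone_generic:
  assumes "(x, y, z) \<in> M_generic" and c: "c \<in> {1..<P}"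
  shows "scale c (S_param x y z) \<in> S_cone_generic"
proof -
  have x: "x \<in> Fp - {0}" and y: "y \<in> Fp - {0}" and on_S: "on_S (S_param x y z)"
    using assms(1) by (simp_all add: M_generic_def on_S_S_param_iff)
  have "\<not> P dvd c * (2 * x * y)"
    using c nonzero_residue_not_dvd[OF x] nonzero_residue_not_dvd[OF y] nonzero_residue_not_dvd[of c]
      not_P_dvd_2 by (simp add: P_dvd_mult_iff)
  then have nonzero: "scale c (S_param x y z) ! 3 \<noteq> 0"
    by (simp add: S_param_nth dvd_eq_mod_eq_0)
  have "on_S (scale c (S_param x y z))"
    using on_S by (rule on_S_scale[rotated, where c = c]) (simp add: S_param_nth cong_def)
  moreover have "\<forall>i<6. scale c (S_param x y z) ! i \<in> Fp"
    using P_gt_2 by (simp add: S_param_nth)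
  moreover have "\<exists>i<6. scale c (S_param x y z) ! i \<noteq> 0"
    using nonzero by (intro exI[of _ 3]) simp
  moreover have "length (scale c (S_param x y z)) = 6"
    by (simp add: S_param_nth)
  ultimately show ?thesis
    using nonzero unfolding S_cone_generic_def S_cone_iff by simp
qed

lemma scale_S_param_eq_cong:
  assumes "scale c (S_param x y z) = scale c' (S_param x' y' z')"
  shows "[c * z = c' * z'] (mod P)" and "[c * (2 * x) = c' * (2 * x')] (mod P)"
    and "[c * (2 * y) = c' * (2 * y')] (mod P)" and "[c * (2 * x * y) = c' * (2 * x' * y')] (mod P)"
proof -
  have coord: "[c * S_param x y z ! i = c' * S_param x' y' z' ! i] (mod P)" if "i < 6" for i
    using arg_cong[OF assms, of "\<lambda>v. v ! i"] that by (simp add: S_param_nth cong_def)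
  have coord: "[c * z = c' * z'] (mod P)"
    "[c * (y * (x^2 + 1)) = c' * (y' * (x'^2 + 1))] (mod P)"
    "[c * (y * (x^2 - 1)) = c' * (y' * (x'^2 - 1))] (mod P)"
    "[c * (2 * x * y) = c' * (2 * x' * y')] (mod P)"
    "[c * (x * (y^2 - 1)) = c' * (x' * (y'^2 - 1))] (mod P)"
    "[c * (x * (y^2 + 1)) = c' * (x' * (y'^2 + 1))] (mod P)"
    using coord[of 0] coord[of 1] coord[of 2] coord[of 3] coord[of 4] coord[of 5]
    by (simp_all add: S_param_def)
  show "[c * z = c' * z'] (mod P)" "[c * (2 * x * y) = c' * (2 * x' * y')] (mod P)"
    by (fact coord(1), fact coord(4))
  show "[c * (2 * x) = c' * (2 * x')] (mod P)"
    by (rule cong_lincomb[OF coord(6) coord(5), where q = 1 and r = "-1"]) (simp add: algebra_simps)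
  show "[c * (2 * y) = c' * (2 * y')] (mod P)"
    by (rule cong_lincomb[OF coord(2) coord(3), where q = 1 and r = "-1"]) (simp add: algebra_simps)
qed

lemma scale_S_param_injective:
  assumes "(x, y, z) \<in> M_generic" "c \<in> {1..<P}" "(x', y', z') \<in> M_generic" "c' \<in> {1..<P}"
    and eq: "scale c (S_param x y z) = scale c' (S_param x' y' z')"
  shows "x = x' \<and> y = y' \<and> z = z' \<and> c = c'"
proof -
  have in_Fp: "x \<in> Fp" "y \<in> Fp" "z \<in> Fp" "c \<in> Fp" "x' \<in> Fp" "y' \<in> Fp" "z' \<in> Fp" "c' \<in> Fp"
    using assms by (auto simp: M_generic_def)
  have nz: "\<not> P dvd x" "\<not> P dvd y" "\<not> P dvd c"
    using assms by (auto simp: M_generic_def residue_dvd_iff)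
  note coord = scale_S_param_eq_cong[OF eq]
  have "[x * (c * (2 * y)) = x' * (c * (2 * y))] (mod P)"
    by (rule cong_lincomb[OF coord(4) coord(3), where q = 1 and r = "- x'"]) (simp add: algebra_simps)
  then have "[x = x'] (mod P)"
    by (rule cong_mult_cancel_right) (use nz not_P_dvd_2 in \<open>simp add: P_dvd_mult_iff\<close>)
  then have x: "x = x'"
    using in_Fp by (simp add: residue_cong_iff)
  have "[y * (c * (2 * x)) = y' * (c * (2 * x))] (mod P)"
    by (rule cong_lincomb[OF coord(4) coord(2), where q = 1 and r = "- y'"]) (simp add: algebra_simps)
  then have "[y = y'] (mod P)"
    by (rule cong_mult_cancel_right) (use nz not_P_dvd_2 in \<open>simp add: P_dvd_mult_iff\<close>)
  then have y: "y = y'"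
    using in_Fp by (simp add: residue_cong_iff)
  have "[c * (2 * x) = c' * (2 * x)] (mod P)"
    using coord(2) x by simp
  then have "[c = c'] (mod P)"
    by (rule cong_mult_cancel_right) (use nz not_P_dvd_2 in \<open>simp add: P_dvd_mult_iff\<close>)
  then have c: "c = c'"
    using in_Fp by (simp add: residue_cong_iff)
  have "[z * c = z' * c] (mod P)"
    using coord(1) c by (simp add: mult.commute)
  then have "[z = z'] (mod P)"
    by (rule cong_mult_cancel_right) (use nz in simp)
  then have "z = z'"
    using in_Fp by (simp add: residue_cong_iff)
  with x y c show ?thesis
    by simp
qed

lemma diff_squares_linear_param:
  assumes ab: "[a^2 - b^2 = d^2] (mod P)" and d: "\<not> P dvd d"
  obtains x where "x \<in> Fp - {0}" "\<not> P dvd a - b" "[(a - b) * x = d] (mod P)"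
    "[(a - b) * x^2 = a + b] (mod P)"
proof -
  have "(a - b) * (a + b) = a^2 - b^2"
    by (simp add: algebra_simps power2_eq_square)
  with ab have factor: "[(a - b) * (a + b) = d^2] (mod P)"
    by simp
  have "\<not> P dvd d^2"
    using d prime_dvd_power[OF prime_P] by blast
  then have D: "\<not> P dvd a - b"
    using cong_dvd_iff[OF factor] by auto
  then obtain x where x: "x \<in> Fp" "[(a - b) * x = d] (mod P)"
    using ex_linear_congruence_solution by blast
  have "x \<noteq> 0"
    using x(2) d by (auto simp: cong_iff_dvd_diff)
  moreover have "[((a - b) * x^2) * (a - b) = (a + b) * (a - b)] (mod P)"
  proof -
    have "((a - b) * x^2) * (a - b) = ((a - b) * x)^2"
      by (simp add: power2_eq_square)
    also have "[\<dots> = d^2] (mod P)"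
      using x(2) by (rule cong_pow)
    also have "[d^2 = (a + b) * (a - b)] (mod P)"
      using cong_sym[OF factor] by (simp add: mult.commute)
    finally show ?thesis .
  qed
  then have "[(a - b) * x^2 = a + b] (mod P)"
    using D by (rule cong_mult_cancel_right)
  ultimately show ?thesis
    using that x D by blast
qed

lemma on_S_outer_diff_squares: "on_S v \<Longrightarrow> [v!5^2 - v!4^2 = v!3^2] (mod P)"
proof -
  assume "on_S v"
  then have Q1: "[v!1^2 - v!2^2 = v!3^2] (mod P)" and Q2: "[v!0^2 - v!1^2 = v!4^2] (mod P)"
    and Q3: "[v!0^2 - v!2^2 = v!5^2] (mod P)"
    by (simp_all add: on_S_def)
  have "[v!5^2 - v!4^2 = v!1^2 - v!2^2] (mod P)"
    by (rule cong_lincomb[OF Q2 Q3, where q = 1 and r = "-1"]) (simp add: algebra_simps)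
  then show ?thesis
    using Q1 by (rule cong_trans)
qed

lemma diff_squares_half_coords:
  assumes "[2 * y * c = a - b] (mod P)" and "[(a - b) * x^2 = a + b] (mod P)"
  shows "[c * (y * (x^2 + 1)) = a] (mod P)" and "[c * (y * (x^2 - 1)) = b] (mod P)"
proof -
  have "[c * (y * (x^2 + 1)) * 2 = a * 2] (mod P)"
    by (rule cong_lincomb[OF assms, where q = "x^2 + 1" and r = 1]) (simp add: algebra_simps)
  then show "[c * (y * (x^2 + 1)) = a] (mod P)"
    using not_P_dvd_2 by (rule cong_mult_cancel_right)
  have "[c * (y * (x^2 - 1)) * 2 = b * 2] (mod P)"
    by (rule cong_lincomb[OF assms, where q = "x^2 - 1" and r = 1]) (simp add: algebra_simps)
  then show "[c * (y * (x^2 - 1)) = b] (mod P)"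
    using not_P_dvd_2 by (rule cong_mult_cancel_right)
qed

lemma on_S_preimage:
  assumes on_S: "on_S v" and v3: "\<not> P dvd v!3"
  obtains x y z c where "x \<in> Fp - {0}" "y \<in> Fp - {0}" "z \<in> Fp" "c \<in> Fp - {0}"
    "\<forall>i<6. [c * S_param x y z ! i = v!i] (mod P)"
proof -
  have Q1: "[v!1^2 - v!2^2 = v!3^2] (mod P)"
    using on_S by (simp add: on_S_def)
  obtain x where x: "x \<in> Fp - {0}" and D: "\<not> P dvd v!1 - v!2"
    and Dx: "[(v!1 - v!2) * x = v!3] (mod P)" and Dx2: "[(v!1 - v!2) * x^2 = v!1 + v!2] (mod P)"
    by (rule diff_squares_linear_param[OF Q1 v3])
  obtain y where y: "y \<in> Fp - {0}"
    and Ey: "[(v!5 - v!4) * y = v!3] (mod P)" and Ey2: "[(v!5 - v!4) * y^2 = v!5 + v!4] (mod P)"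
    by (rule diff_squares_linear_param[OF on_S_outer_diff_squares[OF on_S] v3])
  have y_dvd: "\<not> P dvd y"
    using y by (rule nonzero_residue_not_dvd)
  then have "\<not> P dvd 2 * y"
    using not_P_dvd_2 by (simp add: P_dvd_mult_iff)
  \<comment> \<open>\<open>c = (v\<^sub>1 - v\<^sub>2) / 2y\<close> and \<open>z = v\<^sub>0 / c\<close>\<close>
  then obtain c where c: "c \<in> Fp" and cy: "[2 * y * c = v!1 - v!2] (mod P)"
    using ex_linear_congruence_solution by blast
  have "c \<noteq> 0"
    using cy D by (auto simp: cong_iff_dvd_diff dvd_diff_commute)
  then have c_dvd: "\<not> P dvd c"
    using c by (simp add: residue_dvd_iff)
  then obtain z where z: "z \<in> Fp" and cz: "[c * z = v!0] (mod P)"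
    using ex_linear_congruence_solution by blast
  have cxy: "[2 * c * x * y = v!3] (mod P)"
    by (rule cong_lincomb[OF cy Dx, where q = x and r = 1]) (simp add: algebra_simps)
  have "[2 * x * c * y = (v!5 - v!4) * y] (mod P)"
    by (rule cong_lincomb[OF cxy Ey, where q = 1 and r = "-1"]) (simp add: algebra_simps)
  then have cx: "[2 * x * c = v!5 - v!4] (mod P)"
    using y_dvd by (rule cong_mult_cancel_right)
  have "[c * S_param x y z ! i = v!i] (mod P)" if "i < 6" for i
  proof -
    consider "i = 0" | "i = 1" | "i = 2" | "i = 3" | "i = 4" | "i = 5"
      using \<open>i < 6\<close> by linarith
    then show ?thesis
      using cz diff_squares_half_coords[OF cy Dx2] cxy diff_squares_half_coords[OF cx Ey2]
      by cases (simp_all add: S_param_def ac_simps)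
  qed
  with x y z c \<open>c \<noteq> 0\<close> show ?thesis
    using that by blast
qed

lemma S_cone_generic_subset_image:
  "S_cone_generic \<subseteq> (\<lambda>((x, y, z), c). scale c (S_param x y z)) ` (M_generic \<times> {1..<P})"
proof
  fix v
  assume "v \<in> S_cone_generic"
  then have len: "length v = 6" and in_Fp: "\<forall>i<6. v!i \<in> Fp" and on_S: "on_S v" and "v!3 \<noteq> 0"
    by (auto simp: S_cone_generic_def S_cone_iff)
  then have "\<not> P dvd v!3"
    using residue_dvd_iff[of "v!3"] by simp
  with on_S obtain x y z c where x: "x \<in> Fp - {0}" and y: "y \<in> Fp - {0}" and z: "z \<in> Fp"
    and c: "c \<in> Fp - {0}" and "\<forall>i<6. [c * S_param x y z ! i = v!i] (mod P)"
    by (rule on_S_preimage)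
  then have coord: "\<forall>i<6. [v!i = c * S_param x y z ! i] (mod P)"
    using cong_sym by blast
  have "v = scale c (S_param x y z)"
    using len in_Fp coord by (simp add: S_param_nth eq_scale_if_cong)
  moreover obtain c' where "\<forall>i<6. [S_param x y z ! i = c' * v!i] (mod P)"
    using cong_scale_inverse[OF coord] c nonzero_residue_not_dvd by blast
  then have "on_S (S_param x y z)"
    using on_S by (rule on_S_scale)
  then have "(x, y, z) \<in> M_generic"
    using x y z by (simp add: M_generic_def on_S_S_param_iff)
  moreover have "c \<in> {1..<P}"
    using c by auto
  ultimately show "v \<in> (\<lambda>((x, y, z), c). scale c (S_param x y z)) ` (M_generic \<times> {1..<P})"
    by force
qed

lemma card_S_cone_generic: "card S_cone_generic = (p - 1) * card M_generic"
proof -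
  let ?f = "\<lambda>((x, y, z), c). scale c (S_param x y z)"
  have "inj_on ?f (M_generic \<times> {1..<P})"
    by (rule inj_onI) (auto dest: scale_S_param_injective)
  moreover have "?f ` (M_generic \<times> {1..<P}) = S_cone_generic"
    using S_cone_generic_subset_image scale_S_param_in_S_cone_generic by fastforce
  ultimately have "card S_cone_generic = card (M_generic \<times> {1..<P})"
    using card_image by fastforce
  also have "\<dots> = card M_generic * (p - 1)"
    by (cases p) (simp_all add: card_cartesian_product)
  finally show ?thesis
    by simp
qed

lemma M_eq_card_M_generic: "M p = card M_generic + 4 * p - 3"
proof -
  define R where "R x y = square_roots ((x^2 * y^2 + 1) * (x^2 + y^2))" for x y
  have fin: "finite (R x y)" for x y
    by (simp add: R_def)
  have "{(x, y, z). x \<in> Fp \<and> y \<in> Fp \<and> z \<in> Fp \<and> [z^2 = (x^2 * y^2 + 1) * (x^2 + y^2)] (mod P)} =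
      (SIGMA x:Fp. SIGMA y:Fp. R x y)"
    by (auto simp: R_def square_roots_def)
  then have "M p = (\<Sum>x\<in>Fp. \<Sum>y\<in>Fp. card (R x y))"
    by (simp add: M_def fin)
  also have "\<dots> = (\<Sum>x\<in>Fp. card (R x 0)) + (\<Sum>x\<in>Fp. \<Sum>y\<in>Fp - {0}. card (R x y))"
  proof -
    have "(\<Sum>y\<in>Fp. card (R x y)) = card (R x 0) + (\<Sum>y\<in>Fp - {0}. card (R x y))" for x
      by (rule sum_remove_0)
    then show ?thesis
      by (simp add: sum.distrib)
  qed
  also have "(\<Sum>x\<in>Fp. \<Sum>y\<in>Fp - {0}. card (R x y)) =
      (\<Sum>y\<in>Fp - {0}. card (R 0 y)) + (\<Sum>x\<in>Fp - {0}. \<Sum>y\<in>Fp - {0}. card (R x y))"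
    by (rule sum_remove_0)
  also have "(\<Sum>x\<in>Fp - {0}. \<Sum>y\<in>Fp - {0}. card (R x y)) = card M_generic"
  proof -
    have "M_generic = (SIGMA x:Fp - {0}. SIGMA y:Fp - {0}. R x y)"
      by (auto simp: M_generic_def R_def square_roots_def)
    then show ?thesis
      by (simp add: fin)
  qed
  also have "(\<Sum>x\<in>Fp. card (R x 0)) = 1 + 2 * (p - 1)"
    using sum_remove_0[of "\<lambda>x. card (R x 0)"] sum_card_square_roots_nonzero
      card_square_roots_residue[of 0] P_gt_2 by (simp add: R_def)
  also have "(\<Sum>y\<in>Fp - {0}. card (R 0 y)) = 2 * (p - 1)"
    using sum_card_square_roots_nonzero by (simp add: R_def)
  finally show ?thesis
    using P_gt_2 by simp
qed

section \<open>Points of S on the hyperplane x3 = 0\<close>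

definition S_cone_special :: "int list set" where
  "S_cone_special = {v \<in> S_cone p. v!3 = 0}"

definition S_special_point :: "int \<times> (int \<times> int) \<times> int \<times> int \<Rightarrow> int list" where
  "S_special_point = (\<lambda>(c, (a, b), (e, g)). [a, b, e, 0, c, g])"

lemma list_length_6_eq: "length v = 6 \<Longrightarrow> v = [v!0, v!1, v!2, v!3, v!4, v!5]"
proof (rule nth_equalityI)
  fix i
  assume "length v = 6" and "i < length v"
  then consider "i = 0" | "i = 1" | "i = 2" | "i = 3" | "i = 4" | "i = 5"
    by linarith
  then show "v!i = [v!0, v!1, v!2, v!3, v!4, v!5] ! i"
    by cases simp_all
qed simp

definition S_special_params :: "(int \<times> (int \<times> int) \<times> int \<times> int) set" where
  "S_special_params =
     (SIGMA c:Fp. SIGMA ab:hyperbola (c^2). square_roots (snd ab ^ 2) \<times> square_roots (c^2))"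

lemma insert_zero_S_cone_special_iff:
  "v \<in> insert (replicate 6 0) S_cone_special \<longleftrightarrow>
     length v = 6 \<and> (\<forall>i<6. v!i \<in> Fp) \<and> v!3 = 0 \<and> on_S v"
proof (cases "v = replicate 6 0")
  case True
  then show ?thesis
    using P_gt_2 by (simp add: on_S_def)
next
  case False
  then have "length v = 6 \<Longrightarrow> \<exists>i<6. v!i \<noteq> 0"
    by (auto simp: list_eq_iff_nth_eq)
  then show ?thesis
    using False by (auto simp: S_cone_special_def S_cone_iff)
qed

lemma S_special_point_in_S_cone_special:
  assumes "t \<in> S_special_params"
  shows "S_special_point t \<in> insert (replicate 6 0) S_cone_special"
proof -
  obtain a b c e g where t: "t = (c, (a, b), (e, g))" and in_Fp: "a \<in> Fp" "b \<in> Fp" "c \<in> Fp" "e \<in> Fp" "g \<in> Fp"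
    and abc: "[a^2 - b^2 = c^2] (mod P)" and e: "[e^2 = b^2] (mod P)" and g: "[g^2 = c^2] (mod P)"
    using assms by (auto simp: S_special_params_def hyperbola_def square_roots_def)
  have "[b^2 - e^2 = 0^2] (mod P)"
    using e by (simp add: cong_iff_dvd_diff dvd_diff_commute)
  moreover have "[a^2 - e^2 = c^2] (mod P)"
    by (rule cong_lincomb[OF abc e, where q = 1 and r = "-1"]) simp
  then have "[a^2 - e^2 = g^2] (mod P)"
    using cong_sym[OF g] by (rule cong_trans)
  ultimately show ?thesis
    using in_Fp abc unfolding insert_zero_S_cone_special_iff
    by (auto simp: t S_special_point_def on_S_def less_Suc_eq nth_Cons')
qed

lemma S_cone_special_subset_image:
  "insert (replicate 6 0) S_cone_special \<subseteq> S_special_point ` S_special_params"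
proof
  fix v
  assume "v \<in> insert (replicate 6 0) S_cone_special"
  then have len: "length v = 6" and in_Fp: "\<forall>i<6. v!i \<in> Fp" and v3: "v!3 = 0" and on_S: "on_S v"
    unfolding insert_zero_S_cone_special_iff by blast+
  have Q1: "[v!1^2 - v!2^2 = v!3^2] (mod P)" and Q2: "[v!0^2 - v!1^2 = v!4^2] (mod P)"
    and Q3: "[v!0^2 - v!2^2 = v!5^2] (mod P)"
    using on_S by (simp_all add: on_S_def)
  have e: "[v!2^2 = v!1^2] (mod P)"
    using Q1 v3 by (simp add: cong_iff_dvd_diff dvd_diff_commute)
  have "[v!0^2 - v!2^2 = v!4^2] (mod P)"
    by (rule cong_lincomb[OF Q2 e, where q = 1 and r = "-1"]) simp
  then have g: "[v!5^2 = v!4^2] (mod P)"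
    using cong_sym[OF Q3] by (rule cong_trans[rotated])
  have "v = S_special_point (v!4, (v!0, v!1), (v!2, v!5))"
    using list_length_6_eq[OF len] v3 by (simp add: S_special_point_def)
  moreover have "(v!4, (v!0, v!1), (v!2, v!5)) \<in> S_special_params"
    using in_Fp Q2 e g by (simp add: S_special_params_def hyperbola_def square_roots_def)
  ultimately show "v \<in> S_special_point ` S_special_params"
    by blast
qed

lemma card_S_special_params: "int (card S_special_params) = 4 * P^2 - 8 * P + 5"
proof -
  define r where "r c = int (card (square_roots (c^2)))" for c
  define g where "g c = (2 * int (card (hyperbola (c^2))) - r c) * r c" for c
  have "finite (SIGMA ab:hyperbola (c^2). square_roots (snd ab ^ 2) \<times> square_roots (c^2))" for c
    by (intro finite_SigmaI finite_cartesian_product) simp_all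
  then have "int (card S_special_params) =
      (\<Sum>c\<in>Fp. \<Sum>ab\<in>hyperbola (c^2). int (card (square_roots (snd ab ^ 2))) * r c)"
    by (simp add: S_special_params_def r_def card_cartesian_product)
  also have "\<dots> = (\<Sum>c\<in>Fp. g c)"
    by (simp add: g_def r_def sum_hyperbola_card_square_roots flip: sum_distrib_right)
  also have "\<dots> = g 0 + (\<Sum>c\<in>Fp - {0}. g c)"
    by (rule sum_remove_0)
  also have "g 0 = 4 * P - 3"
    using card_hyperbola[of 0] card_square_roots_residue[of 0] P_gt_2 by (simp add: g_def r_def)
  also have "(\<Sum>c\<in>Fp - {0}. g c) = (\<Sum>c\<in>Fp - {0}. 4 * P - 8)"
  proof (rule sum.cong)
    fix c
    assume c: "c \<in> Fp - {0}"
    then have "\<not> P dvd c^2"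
      using nonzero_residue_not_dvd prime_dvd_power[OF prime_P] by blast
    then show "g c = 4 * P - 8"
      using c card_hyperbola[of "c^2"] card_square_roots_residue[of c] by (simp add: g_def r_def)
  qed simp
  also have "\<dots> = (P - 1) * (4 * P - 8)"
    using P_gt_2 by (simp add: card_Diff_singleton)
  finally show ?thesis
    by (simp add: power2_eq_square algebra_simps)
qed

lemma card_S_cone_special: "int (card S_cone_special) = 4 * (P - 1)^2"
proof -
  have "S_special_point ` S_special_params = insert (replicate 6 0) S_cone_special"
    using S_special_point_in_S_cone_special S_cone_special_subset_image by blast
  moreover have "inj S_special_point"
    by (auto simp: inj_def S_special_point_def)
  ultimately have "card (insert (replicate 6 0) S_cone_special) = card S_special_params"
    by (metis card_image inj_on_subset subset_UNIV)
  moreover have "replicate 6 0 \<notin> S_cone_special"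
    by (simp add: S_cone_special_def S_cone_def)
  moreover have "finite S_cone_special"
    using finite_S_cone by (simp add: S_cone_special_def)
  ultimately show ?thesis
    using card_S_special_params by (simp add: power2_eq_square algebra_simps)
qed

lemma card_S_points_eq_M_minus_1: "int (card (S_points p)) + 1 = int (M p)"
proof -
  have "S_cone p = S_cone_generic \<union> S_cone_special"
    and "S_cone_generic \<inter> S_cone_special = {}"
    by (auto simp: S_cone_generic_def S_cone_special_def)
  moreover have "finite S_cone_generic" "finite S_cone_special"
    using finite_S_cone by (simp_all add: S_cone_generic_def S_cone_special_def)
  ultimately have "int (card (S_cone p)) = int (card S_cone_generic) + int (card S_cone_special)"
    by (simp add: card_Un_disjoint)
  moreover have "int (p - 1) = P - 1"
    using P_gt_2 by simp
  then have "int (card (S_cone p)) = (P - 1) * int (card (S_points p))"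
    and "int (card S_cone_generic) = (P - 1) * int (card M_generic)"
    by (simp_all add: card_S_cone card_S_cone_generic of_nat_mult)
  ultimately have "(P - 1) * int (card (S_points p)) = (P - 1) * (int (card M_generic) + 4 * (P - 1))"
    using card_S_cone_special by (simp add: power2_eq_square algebra_simps)
  then have "int (card (S_points p)) = int (card M_generic) + 4 * (P - 1)"
    using P_gt_2 by simp
  then show ?thesis
    using M_eq_card_M_generic P_gt_2 by simp
qed

end

theorem lemma4p6:
  fixes p k :: nat
  assumes "prime p" and "p = 4 * k + 1"
  shows "int (card (S_points p)) = (int p + 1)^2 + (J p k)^2 \<longleftrightarrow>
           (int (M p) = (int p + 1)^2 + (int (N p) - int p)^2 + 1 \<and>
            (int p + 1)^2 + (int (N p) - int p)^2 + 1 = (int p + 1)^2 + (J p k)^2 + 1)"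
proof -
  interpret odd_prime p
    using assms by unfold_locales simp_all
  have "int (card (S_points p)) + 1 = int (M p)"
    by (rule card_S_points_eq_M_minus_1)
  moreover have "J p k = int (N p) - int p"
    using J_eq_sum_Legendre[OF assms(2)] N_eq_sum_Legendre by simp
  ultimately show ?thesis
    by auto
qed

end
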